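(* Let $A:\mathbb{R}\to\mathbb{R}^{n\times n}$, $t\mapsto A(t)=(a_{kl}(t))$, be a bounded and piecewise continuous function such that for every $t$ the matrix $A(t)$ is Metzler with zero row sums. Consider the linear system $\dot{x}=A(t)x$. Suppose there exist an index $k\in\{1,\dots,n\}$, a threshold $\delta>0$ and an interval length $T>0$ such that for every $t\in\mathbb{R}$, in the $\delta$-digraph associated to the matrix $\int_t^{t+T}A(s)\,\mathrm{d}s$, every node $l\neq k$ can be reached from node $k$. Then the equilibrium set of consensus states $E=\{x\in\mathbb{R}^n: x_1=\dots=x_n\}$ is uniformly exponentially stable for $\dot{x}=A(t)x$. In particular, all components of any solution $\zeta(t)$ of $\dot{x}=A(t)x$ converge to a common value as $t\to\infty$.
   Context: A real square matrix is Metzler if all its off-diagonal entries are nonnegative; it has zero row sums if each of its rows sums to zero (note that the integral over $[t,t+T]$ of such matrices is again Metzler with zero row sums). For $\delta\ge 0$, the $\delta$-digraph associated to an $n\times n$ Metzler matrix $M=(m_{kl})$ with zero row sums is the directed graph with node set $\{1,\dots,n\}$ having an arc from node $l$ to node $k$ ($k\neq l$) if and only if $m_{kl}>\delta$. A node $l$ can be reached from a node $k\neq l$ if there is a directed path from $k$ to $l$ respecting the orientation of the arcs. Uniform exponential stability of $E$ means: there exist constants $c,\lambda>0$ such that for every $t_0\in\mathbb{R}$ and every solution $\zeta$, $\mathrm{dist}(\zeta(t),E)\le c\,e^{-\lambda(t-t_0)}\mathrm{dist}(\zeta(t_0),E)$ for all $t\ge t_0$. *)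

theory Defs
  imports "HOL-Analysis.Analysis"
begin

text \<open>Matrices are real^'n^'n; entry (k,l) is M$k$l (row k, column l).\<close>

definition metzler :: "real^'n^'n \<Rightarrow> bool" where
  "metzler M \<longleftrightarrow> (\<forall>k l. k \<noteq> l \<longrightarrow> M$k$l \<ge> 0)"

definition zero_row_sums :: "real^'n^'n \<Rightarrow> bool" where
  "zero_row_sums M \<longleftrightarrow> (\<forall>k. (\<Sum>l\<in>UNIV. M$k$l) = 0)"

text \<open>Arcs of the delta-digraph: a pair (l,k) is an arc from l to k iff k \<noteq> l and m_kl > delta.\<close>
definition delta_digraph :: "real^'n^'n \<Rightarrow> real \<Rightarrow> ('n \<times> 'n) set" where
  "delta_digraph M \<delta> = {(l, k). k \<noteq> l \<and> M$k$l > \<delta>}"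

definition reachable :: "('n \<times> 'n) set \<Rightarrow> 'n \<Rightarrow> 'n \<Rightarrow> bool" where
  "reachable G k l \<longleftrightarrow> (k, l) \<in> G\<^sup>+"

definition piecewise_continuous :: "(real \<Rightarrow> 'a::topological_space) \<Rightarrow> bool" where
  "piecewise_continuous f \<longleftrightarrow>
     (\<forall>a b. \<exists>S. finite S \<and> (\<forall>t\<in>{a..b} - S. isCont f t) \<and>
        (\<forall>s\<in>S. (\<exists>L. (f \<longlongrightarrow> L) (at_left s)) \<and> (\<exists>R. (f \<longlongrightarrow> R) (at_right s))))"

text \<open>Solution of x' = A(t) x on [t0, \<infinity>) (Caratheodory sense, integral form).\<close>
definition is_solution :: "(real \<Rightarrow> real^'n^'n) \<Rightarrow> real \<Rightarrow> (real \<Rightarrow> real^'n) \<Rightarrow> bool" where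
  "is_solution A t0 \<zeta> \<longleftrightarrow>
     (\<forall>t\<ge>t0. ((\<lambda>s. A s *v \<zeta> s) has_integral (\<zeta> t - \<zeta> t0)) {t0..t})"

definition consensus_set :: "(real^'n) set" where
  "consensus_set = {x. \<forall>i j. x$i = x$j}"

definition unif_exp_stable :: "(real \<Rightarrow> real^'n^'n) \<Rightarrow> (real^'n) set \<Rightarrow> bool" where
  "unif_exp_stable A E \<longleftrightarrow>
     (\<exists>c r. c > 0 \<and> r > 0 \<and>
        (\<forall>t0 \<zeta>. is_solution A t0 \<zeta> \<longrightarrow>
           (\<forall>t\<ge>t0. infdist (\<zeta> t) E \<le> c * exp (- r * (t - t0)) * infdist (\<zeta> t0) E)))"

end

theory Submission
  imports Defs "HOL-Real_Asymp.Real_Asymp"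
begin

(* Let \<alpha> bound the entries of A. For a solution y, the rescaled w(t) = e^{\<alpha>(t-s)} y(t) solves
   w' = (A(t) + \<alpha> I) w, whose matrix is entrywise nonnegative. Hence nonnegative data stay
   nonnegative, every component of w is nondecreasing, and along an arc (p,q) of the \<delta>-digraph
   of the integral of A over [u, u+T] the value w_p(u) is passed on to w_q(u+T) with weight
   more than \<delta>. As constant vectors are solutions, max_i y_i is nonincreasing and min_i y_i is
   nondecreasing. If y_k(t) lies in the lower half of [min, max], applying this to max - y shows
   that after n windows of length T the bound has propagated from k to every node, so every
   component ends up at least \<gamma>^n (max - min)/2 below the old maximum, where
   \<gamma> = e^{-\<alpha> T} min(1, \<delta>); symmetrically otherwise. So the spread max - min contracts by the
   factor 1 - \<gamma>^n/2 every nT time units and decays exponentially. The spread is comparable to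
   the distance from the consensus set, and the squeezed max and min have a common limit. *)

section \<open>Solutions in integral form\<close>

definition antiderivative_from :: "(real \<Rightarrow> 'a::banach) \<Rightarrow> real \<Rightarrow> (real \<Rightarrow> 'a) \<Rightarrow> bool" where
  "antiderivative_from f s w \<longleftrightarrow> (\<forall>t\<ge>s. (f has_integral (w t - w s)) {s..t})"

lemma is_solution_iff_antiderivative_from:
  "is_solution A s y \<longleftrightarrow> antiderivative_from (\<lambda>x. A x *v y x) s y"
  by (simp add: is_solution_def antiderivative_from_def)

lemma antiderivative_from_mono:
  assumes w: "antiderivative_from f s w" and "s \<le> s'"
  shows "antiderivative_from f s' w"
  unfolding antiderivative_from_def
proof (intro allI impI)
  fix t assume "s' \<le> t"
  have st: "(f has_integral (w t - w s)) {s..t}" and ss': "(f has_integral (w s' - w s)) {s..s'}"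
    using w \<open>s \<le> s'\<close> \<open>s' \<le> t\<close> unfolding antiderivative_from_def by auto
  have "f integrable_on {s'..t}"
    using integrable_subinterval_real[OF has_integral_integrable[OF st]] \<open>s \<le> s'\<close> by auto
  then obtain J where J: "(f has_integral J) {s'..t}" by blast
  have "w t - w s = (w s' - w s) + J"
    using has_integral_unique[OF st has_integral_combine[OF \<open>s \<le> s'\<close> \<open>s' \<le> t\<close> ss' J]] .
  with J show "(f has_integral (w t - w s')) {s'..t}" by (simp add: algebra_simps)
qed

lemma is_solution_mono: "is_solution A s y \<Longrightarrow> s \<le> s' \<Longrightarrow> is_solution A s' y"
  unfolding is_solution_iff_antiderivative_from by (rule antiderivative_from_mono)

lemma antiderivative_from_continuous_on:
  assumes w: "antiderivative_from f s w"
  shows "continuous_on {s..b} w"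
proof (cases "s \<le> b")
  case True
  have "f integrable_on {s..b}" using w True unfolding antiderivative_from_def by blast
  then have "continuous_on {s..b} (\<lambda>x. w s + integral {s..x} f)"
    by (intro continuous_intros indefinite_integral_continuous_1)
  then show ?thesis
    by (rule continuous_on_eq) (use w in \<open>auto simp: antiderivative_from_def integral_unique\<close>)
qed simp

lemma antiderivative_from_component:
  fixes f w :: "real \<Rightarrow> 'a::banach^'n"
  assumes "antiderivative_from f s w" and "s \<le> t"
  shows "((\<lambda>x. f x $ i) has_integral (w t $ i - w s $ i)) {s..t}"
  using has_integral_linear[OF _ bounded_linear_vec_nth, of f "w t - w s" "{s..t}" i] assms
  by (simp add: antiderivative_from_def o_def)

lemma antiderivative_from_has_vector_derivative:
  assumes w: "antiderivative_from g s w" and "s < x" and "isCont g x"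
  shows "(w has_vector_derivative g x) (at x)"
proof -
  have "s \<le> x + 1" using \<open>s < x\<close> by simp
  with w have "g integrable_on {s..x+1}" unfolding antiderivative_from_def by blast
  then have "((\<lambda>u. integral {s..u} g) has_vector_derivative g x) (at x within {s..x+1})"
    using integral_has_vector_derivative_continuous_at[of g s "x+1" x "{}"] \<open>s < x\<close> \<open>isCont g x\<close>
    by (simp add: continuous_at_imp_continuous_at_within)
  then have "((\<lambda>u. w s + integral {s..u} g) has_vector_derivative g x) (at x)"
    using at_within_Icc_at[of s x "x+1"] \<open>s < x\<close>
    by (auto intro: has_vector_derivative_add[OF has_vector_derivative_const, simplified])
  then show ?thesis
  proof (rule has_vector_derivative_transform_within_open[where S = "{s<..}"])
    fix u assume "u \<in> {s<..}"
    then have "(g has_integral (w u - w s)) {s..u}"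
      using w unfolding antiderivative_from_def by auto
    then show "w s + integral {s..u} g = w u" by (simp add: integral_unique)
  qed (use \<open>s < x\<close> in auto)
qed

lemma antiderivative_from_exp_scaleR:
  assumes w: "antiderivative_from g s w"
    and cont: "\<And>b. \<exists>S. finite S \<and> (\<forall>x\<in>{s<..<b} - S. isCont g x)"
  shows "antiderivative_from (\<lambda>x. exp (a * (x - s)) *\<^sub>R g x + a *\<^sub>R (exp (a * (x - s)) *\<^sub>R w x)) s
           (\<lambda>x. exp (a * (x - s)) *\<^sub>R w x)"
  unfolding antiderivative_from_def
proof (intro allI impI)
  fix b assume "s \<le> b"
  obtain S where "finite S" and S: "\<forall>x\<in>{s<..<b} - S. isCont g x" using cont by blast
  show "((\<lambda>x. exp (a * (x - s)) *\<^sub>R g x + a *\<^sub>R (exp (a * (x - s)) *\<^sub>R w x)) has_integral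
          (exp (a * (b - s)) *\<^sub>R w b - exp (a * (s - s)) *\<^sub>R w s)) {s..b}"
  proof (rule fundamental_theorem_of_calculus_interior_strong[OF \<open>finite S\<close> \<open>s \<le> b\<close>])
    fix x assume x: "x \<in> {s<..<b} - S"
    have "(w has_vector_derivative g x) (at x)"
      using antiderivative_from_has_vector_derivative[OF w] x S by auto
    moreover have "((\<lambda>u. exp (a * (u - s))) has_real_derivative a * exp (a * (x - s))) (at x)"
      by (auto intro!: derivative_eq_intros)
    ultimately show "((\<lambda>x. exp (a * (x - s)) *\<^sub>R w x) has_vector_derivative
        exp (a * (x - s)) *\<^sub>R g x + a *\<^sub>R (exp (a * (x - s)) *\<^sub>R w x)) (at x)"
      using has_vector_derivative_scaleR by (fastforce simp: algebra_simps)
  qed (intro continuous_intros antiderivative_from_continuous_on[OF w])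
qed

lemma bounded_range_matrix_entries:
  fixes A :: "'a \<Rightarrow> real^'n^'m"
  assumes "bounded (range A)"
  obtains B where "0 < B" "\<And>t i j. \<bar>A t $ i $ j\<bar> \<le> B"
proof -
  obtain B where "0 < B" and B: "\<And>t. norm (A t) \<le> B"
    using assms unfolding bounded_pos by blast
  have "\<bar>A t $ i $ j\<bar> \<le> B" for t i j
  proof -
    have "\<bar>A t $ i $ j\<bar> \<le> norm (A t $ i)" by (rule component_le_norm_cart)
    also have "\<dots> \<le> norm (A t)" unfolding norm_vec_def[of "A t"] by (rule member_le_L2_set) simp_all
    finally show ?thesis using B[of t] by linarith
  qed
  with \<open>0 < B\<close> show ?thesis using that by blast
qed

lemma integral_matrix_entry:
  fixes A :: "real \<Rightarrow> real^'n^'m"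
  assumes "A integrable_on S"
  shows "(\<lambda>x. A x $ i $ j) integrable_on S" and "integral S (\<lambda>x. A x $ i $ j) = integral S A $ i $ j"
proof -
  have bl: "bounded_linear (\<lambda>M::real^'n^'m. M $ i $ j)"
    by (rule bounded_linear_compose[OF bounded_linear_vec_nth bounded_linear_vec_nth])
  show "(\<lambda>x. A x $ i $ j) integrable_on S"
    using integrable_linear[OF assms bl] by (simp add: o_def)
  show "integral S (\<lambda>x. A x $ i $ j) = integral S A $ i $ j"
    using integral_linear[OF assms bl] by (simp add: o_def)
qed

lemma trancl_crosses_boundary:
  assumes "(a, b) \<in> r\<^sup>+" and "a \<in> S" and "b \<notin> S"
  obtains x y where "(x, y) \<in> r" and "x \<in> S" and "y \<notin> S"
  using assms by (induction rule: trancl_induct) blast+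

lemma exp_neg_mult_le_iff: "exp (- a) * c \<le> y \<longleftrightarrow> c \<le> exp a * (y::real)"
  by (simp add: exp_minus field_simps)

lemma exp_decay_if_contracting:
  fixes f :: "real \<Rightarrow> real"
  assumes q: "0 < q" "q < 1" and "0 < H"
    and antimono: "\<And>s t. t0 \<le> s \<Longrightarrow> s \<le> t \<Longrightarrow> f t \<le> f s"
    and contracts: "\<And>s. t0 \<le> s \<Longrightarrow> f (s + H) \<le> q * f s"
    and "0 \<le> f t0" and "t0 \<le> t"
  shows "f t \<le> 1 / q * exp (- (ln (1 / q) / H) * (t - t0)) * f t0"
proof -
  have geometric: "f (t0 + real m * H) \<le> q ^ m * f t0" for m
  proof (induction m)
    case (Suc m)
    have "f (t0 + real (Suc m) * H) \<le> q * f (t0 + real m * H)"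
      using contracts[of "t0 + real m * H"] \<open>0 < H\<close> by (simp add: algebra_simps)
    also have "\<dots> \<le> q * (q ^ m * f t0)" using Suc q by simp
    finally show ?case by simp
  qed simp
  define m where "m = nat \<lfloor>(t - t0) / H\<rfloor>"
  have "real m = of_int \<lfloor>(t - t0) / H\<rfloor>"
    using \<open>t0 \<le> t\<close> \<open>0 < H\<close> by (simp add: m_def)
  then have m: "real m \<le> (t - t0) / H" "(t - t0) / H < real m + 1"
    using of_int_floor_le real_of_int_floor_add_one_gt by simp_all
  have "q ^ m = exp (- real m * ln (1 / q))"
    using q by (simp add: exp_of_nat_mult ln_div)
  also have "\<dots> \<le> exp (- ((t - t0) / H - 1) * ln (1 / q))"
    using m q by (intro exp_mono mult_right_mono) auto
  also have "\<dots> = exp (- (ln (1 / q) / H) * (t - t0) + ln (1 / q))"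
    using \<open>0 < H\<close> by (simp add: field_simps)
  also have "\<dots> = 1 / q * exp (- (ln (1 / q) / H) * (t - t0))"
    using q unfolding exp_add by simp
  finally have qm: "q ^ m \<le> 1 / q * exp (- (ln (1 / q) / H) * (t - t0))" .
  have "f t \<le> f (t0 + real m * H)"
    using m \<open>0 < H\<close> by (intro antimono) (auto simp: field_simps)
  also have "\<dots> \<le> q ^ m * f t0" by (rule geometric)
  also have "\<dots> \<le> 1 / q * exp (- (ln (1 / q) / H) * (t - t0)) * f t0"
    using qm \<open>0 \<le> f t0\<close> by (rule mult_right_mono)
  finally show ?thesis .
qed

section \<open>Maximum, minimum and spread of the components\<close>

definition vec_max :: "real^'n \<Rightarrow> real" where
  "vec_max x = Max (range (\<lambda>i. x $ i))"

definition vec_min :: "real^'n \<Rightarrow> real" where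
  "vec_min x = Min (range (\<lambda>i. x $ i))"

definition vec_spread :: "real^'n \<Rightarrow> real" where
  "vec_spread x = vec_max x - vec_min x"

lemma vec_max_ge: "x $ i \<le> vec_max x"
  unfolding vec_max_def by (rule Max_ge) auto

lemma vec_min_le: "vec_min x \<le> x $ i"
  unfolding vec_min_def by (rule Min_le) auto

lemma vec_max_le_iff: "vec_max x \<le> c \<longleftrightarrow> (\<forall>i. x $ i \<le> c)"
  unfolding vec_max_def by (subst Max_le_iff) auto

lemma vec_min_ge_iff: "c \<le> vec_min x \<longleftrightarrow> (\<forall>i. c \<le> x $ i)"
  unfolding vec_min_def by (subst Min_ge_iff) auto

lemma vec_max_attained: obtains i where "x $ i = vec_max x"
proof -
  have "vec_max x \<in> range (\<lambda>i. x $ i)" unfolding vec_max_def by (rule Max_in) auto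
  with that show ?thesis by auto
qed

lemma vec_min_attained: obtains i where "x $ i = vec_min x"
proof -
  have "vec_min x \<in> range (\<lambda>i. x $ i)" unfolding vec_min_def by (rule Min_in) auto
  with that show ?thesis by auto
qed

lemma vec_min_le_max: "vec_min x \<le> vec_max x"
  using vec_min_le[of x undefined] vec_max_ge[of x undefined] by linarith

lemma vec_spread_nonneg: "0 \<le> vec_spread x"
  using vec_min_le_max[of x] by (simp add: vec_spread_def)

lemma infdist_consensus_le_vec_spread:
  "infdist x consensus_set \<le> real CARD('n) * vec_spread (x::real^'n)"
proof -
  have "(\<chi> l. vec_min x) \<in> consensus_set" by (simp add: consensus_set_def)
  then have "infdist x consensus_set \<le> norm (x - (\<chi> l. vec_min x))"
    using infdist_le by (metis dist_norm)
  also have "\<dots> \<le> (\<Sum>i\<in>UNIV. \<bar>(x - (\<chi> l. vec_min x)) $ i\<bar>)" by (rule norm_le_l1_cart)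
  also have "\<dots> \<le> (\<Sum>i\<in>(UNIV::'n set). vec_spread x)"
    by (intro sum_mono) (use vec_min_le[of x] vec_max_ge[of x] in \<open>auto simp: vec_spread_def\<close>)
  finally show ?thesis by simp
qed

lemma vec_spread_le_infdist_consensus: "vec_spread (x::real^'n) \<le> 2 * infdist x consensus_set"
proof -
  obtain i j where i: "x $ i = vec_max x" and j: "x $ j = vec_min x"
    by (metis vec_max_attained vec_min_attained)
  have "(\<chi> l. 0) \<in> (consensus_set :: (real^'n) set)" by (simp add: consensus_set_def)
  then have ne: "consensus_set \<noteq> ({} :: (real^'n) set)" by blast
  have "vec_spread x / 2 \<le> dist x a" if "a \<in> consensus_set" for a
  proof -
    have "vec_spread x = (x - a) $ i - (x - a) $ j"
      using i j that by (simp add: vec_spread_def consensus_set_def)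
    also have "\<dots> \<le> norm (x - a) + norm (x - a)"
      using component_le_norm_cart[of "x - a"] by (smt (verit))
    finally show ?thesis by (simp add: dist_norm)
  qed
  then have "vec_spread x / 2 \<le> (INF a\<in>consensus_set. dist x a)"
    by (intro cINF_greatest[OF ne])
  then show ?thesis using ne by (simp add: infdist_def)
qed

lemma components_tendsto_common_limit:
  fixes z :: "real \<Rightarrow> real^'n"
  assumes max_antimono: "\<And>s t. t0 \<le> s \<Longrightarrow> s \<le> t \<Longrightarrow> vec_max (z t) \<le> vec_max (z s)"
    and min_mono: "\<And>s t. t0 \<le> s \<Longrightarrow> s \<le> t \<Longrightarrow> vec_min (z s) \<le> vec_min (z t)"
    and spread: "((\<lambda>t. vec_spread (z t)) \<longlongrightarrow> 0) at_top"
  shows "\<exists>c. \<forall>i. ((\<lambda>t. z t $ i) \<longlongrightarrow> c) at_top"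
proof -
  define L where "L = (INF s\<in>{t0..}. vec_max (z s))"
  have max_ge_min: "vec_min (z t) \<le> vec_max (z s)" if "t0 \<le> s" "t0 \<le> t" for s t
  proof (cases "s \<le> t")
    case True
    then show ?thesis using max_antimono[OF that(1), of t] vec_min_le_max[of "z t"] by linarith
  next
    case False
    then show ?thesis using min_mono[OF that(2), of s] vec_min_le_max[of "z s"] by linarith
  qed
  have L: "vec_min (z t) \<le> L \<and> L \<le> vec_max (z t)" if "t0 \<le> t" for t
  proof
    show "vec_min (z t) \<le> L"
      unfolding L_def by (rule cINF_greatest) (use max_ge_min that in auto)
    show "L \<le> vec_max (z t)"
      unfolding L_def by (rule cINF_lower) (use max_ge_min that in \<open>auto intro!: bdd_belowI2\<close>)
  qed
  have "((\<lambda>t. z t $ i - L) \<longlongrightarrow> 0) at_top" for i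
  proof (rule Lim_null_comparison[OF _ spread])
    have "\<bar>z t $ i - L\<bar> \<le> vec_spread (z t)" if "t0 \<le> t" for t
      using L[OF that] vec_min_le[of "z t" i] vec_max_ge[of "z t" i]
      unfolding vec_spread_def by linarith
    then show "\<forall>\<^sub>F t in at_top. norm (z t $ i - L) \<le> vec_spread (z t)"
      unfolding eventually_at_top_linorder by auto
  qed
  then show ?thesis by (auto simp: LIM_zero_iff)
qed

section \<open>Monotonicity of Metzler consensus systems\<close>

locale metzler_consensus_system =
  fixes A :: "real \<Rightarrow> real^'n^'n" and \<alpha> :: real
  assumes piecewise_continuous_A: "piecewise_continuous A"
    and metzler_A: "\<And>t. metzler (A t)"
    and zero_row_sums_A: "\<And>t. zero_row_sums (A t)"
    and entry_bound: "\<And>t i j. \<bar>A t $ i $ j\<bar> \<le> \<alpha>"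
    and bound_pos: "0 < \<alpha>"
begin

text \<open>The right-hand side of the rescaled system; its matrix \<open>A t + \<alpha> I\<close> is nonnegative.\<close>

abbreviation shifted :: "real \<Rightarrow> real^'n \<Rightarrow> real^'n" where
  "shifted t x \<equiv> A t *v x + \<alpha> *\<^sub>R x"

lemma A_mult_const: "A t *v (\<chi> l. c) = 0"
  using zero_row_sums_A[of t]
  by (simp add: zero_row_sums_def matrix_vector_mult_def vec_eq_iff sum_distrib_right[symmetric])

lemma shifted_nonneg:
  assumes "\<And>l. 0 \<le> x $ l"
  shows "0 \<le> shifted t x $ i"
proof -
  have "shifted t x $ i = (\<Sum>l\<in>UNIV - {i}. A t $ i $ l * x $ l) + (A t $ i $ i + \<alpha>) * x $ i"
    by (simp add: matrix_vector_mult_def sum.remove[of UNIV i] algebra_simps)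
  moreover have "0 \<le> (\<Sum>l\<in>UNIV - {i}. A t $ i $ l * x $ l)"
    using metzler_A[of t] assms by (intro sum_nonneg mult_nonneg_nonneg) (auto simp: metzler_def)
  moreover have "0 \<le> (A t $ i $ i + \<alpha>) * x $ i"
    using entry_bound[of t i i] assms[of i] by (simp add: abs_le_iff)
  ultimately show ?thesis by simp
qed

lemma shifted_mono:
  assumes "\<And>l. x $ l \<le> y $ l"
  shows "shifted t x $ i \<le> shifted t y $ i"
proof -
  have "shifted t y - shifted t x = shifted t (y - x)"
    by (simp add: matrix_vector_mult_diff_distrib algebra_simps)
  then have "shifted t y $ i - shifted t x $ i = shifted t (y - x) $ i"
    by (metis vector_minus_component)
  with shifted_nonneg[of "y - x" t i] assms show ?thesis by simp
qed

lemma shifted_axis: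
  assumes "i \<noteq> j"
  shows "shifted t (c *\<^sub>R axis j 1) $ i = A t $ i $ j * c"
  using assms by (simp add: matrix_vector_mult_def axis_def if_distrib if_distribR cong: if_cong)

lemma shifted_lower_bound_halves:
  assumes w: "antiderivative_from (\<lambda>x. shifted x (w x)) s w"
    and w0: "\<And>i. 0 \<le> w s $ i" and short: "\<alpha> * (b - s) \<le> 1 / 2" and "0 \<le> \<rho>"
    and lower: "\<And>x j. x \<in> {s..b} \<Longrightarrow> - \<rho> \<le> w x $ j"
    and x: "x \<in> {s..b}"
  shows "- (\<rho> / 2) \<le> w x $ j"
proof -
  have int: "((\<lambda>u. shifted u (w u) $ j) has_integral (w x $ j - w s $ j)) {s..x}"
    using antiderivative_from_component[OF w] x by auto
  have low: "\<alpha> * - \<rho> \<le> shifted u (w u) $ j" if "u \<in> {s..x}" for u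
  proof -
    have "shifted u (\<chi> l. - \<rho>) $ j \<le> shifted u (w u) $ j"
      by (rule shifted_mono) (use lower that x in auto)
    then show ?thesis by (simp add: A_mult_const)
  qed
  have "- ((x - s) * \<alpha> * \<rho>) \<le> w x $ j - w s $ j"
    using has_integral_le[OF has_integral_const_real int low] x by simp
  moreover have "(x - s) * \<alpha> \<le> (b - s) * \<alpha>"
    using x bound_pos by (intro mult_right_mono) auto
  then have "(x - s) * \<alpha> \<le> 1 / 2" using short by (simp add: mult.commute)
  then have "(x - s) * \<alpha> * \<rho> \<le> 1 / 2 * \<rho>" using \<open>0 \<le> \<rho>\<close> by (rule mult_right_mono)
  ultimately show ?thesis using w0[of j] by linarith
qed

lemma shifted_solution_nonneg_short:
  assumes w: "antiderivative_from (\<lambda>x. shifted x (w x)) s w"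
    and w0: "\<And>i. 0 \<le> w s $ i" and short: "\<alpha> * (b - s) \<le> 1 / 2" and x: "x \<in> {s..b}"
  shows "0 \<le> w x $ i"
proof -
  obtain R where "0 < R" and R: "\<And>x. x \<in> {s..b} \<Longrightarrow> norm (w x) \<le> R"
    using compact_imp_bounded[OF compact_continuous_image[OF antiderivative_from_continuous_on[OF w]]]
    unfolding bounded_pos by (meson compact_Icc image_eqI)
  have "- (R / 2 ^ m) \<le> w x $ j" if "x \<in> {s..b}" for m x j
    using that
  proof (induction m arbitrary: x j)
    case 0
    have "\<bar>w x $ j\<bar> \<le> norm (w x)" by (rule component_le_norm_cart)
    also have "\<dots> \<le> R" using R 0 by blast
    finally show ?case by (simp add: abs_le_D2)
  next
    case (Suc m)
    have "- (R / 2 ^ m / 2) \<le> w x $ j"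
      by (rule shifted_lower_bound_halves[OF w w0 short _ Suc.IH Suc.prems]) (use \<open>0 < R\<close> in simp)
    then show ?case by (simp add: power_Suc2)
  qed
  moreover have "(\<lambda>m. - (R / 2 ^ m)) \<longlonglongrightarrow> 0" by real_asymp
  ultimately show ?thesis using x by (auto intro: LIMSEQ_le_const2[OF \<open>(\<lambda>m. - (R / 2 ^ m)) \<longlonglongrightarrow> 0\<close>])
qed

lemma shifted_solution_nonneg:
  assumes w: "antiderivative_from (\<lambda>x. shifted x (w x)) s w"
    and w0: "\<And>i. 0 \<le> w s $ i" and "s \<le> t"
  shows "0 \<le> w t $ i"
proof -
  define h where "h = 1 / (2 * \<alpha>)"
  have h: "0 < h" "\<alpha> * h = 1 / 2" using bound_pos by (auto simp: h_def)
  have "0 \<le> w t $ i" if "t \<in> {s..s + real m * h}" for m t i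
    using that
  proof (induction m arbitrary: t i)
    case 0
    then show ?case using w0 by simp
  next
    case (Suc m)
    let ?s = "s + real m * h"
    show ?case
    proof (cases "t \<le> ?s")
      case True
      then show ?thesis using Suc by simp
    next
      case False
      show ?thesis
      proof (rule shifted_solution_nonneg_short)
        show "antiderivative_from (\<lambda>x. shifted x (w x)) ?s w"
          by (rule antiderivative_from_mono[OF w]) (use h in simp)
        show "0 \<le> w ?s $ j" for j using Suc.IH h by simp
        show "\<alpha> * (?s + h - ?s) \<le> 1 / 2" using h by simp
        show "t \<in> {?s..?s + h}" using False Suc.prems by (simp add: algebra_simps)
      qed
    qed
  qed
  moreover obtain m :: nat where "(t - s) / h \<le> real m" using real_arch_simple by blast
  then have "t \<le> s + real m * h" using h by (simp add: field_simps)
  ultimately show ?thesis using \<open>s \<le> t\<close> by simp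
qed

lemma shifted_solution_component_mono:
  assumes w: "antiderivative_from (\<lambda>x. shifted x (w x)) s w"
    and w0: "\<And>i. 0 \<le> w s $ i" and "s \<le> u" "u \<le> t"
  shows "w u $ i \<le> w t $ i"
proof -
  have int: "((\<lambda>x. shifted x (w x) $ i) has_integral (w t $ i - w u $ i)) {u..t}"
    using antiderivative_from_component[OF antiderivative_from_mono[OF w \<open>s \<le> u\<close>] \<open>u \<le> t\<close>] .
  have "0 \<le> shifted x (w x) $ i" if "x \<in> {u..t}" for x
    by (rule shifted_nonneg, rule shifted_solution_nonneg[OF w w0]) (use that \<open>s \<le> u\<close> in simp)
  then have "0 \<le> w t $ i - w u $ i" by (rule has_integral_nonneg[OF int])
  then show ?thesis by simp
qed

lemma shifted_solution_arc_bound: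
  assumes w: "antiderivative_from (\<lambda>x. shifted x (w x)) s w"
    and w0: "\<And>i. 0 \<le> w s $ i" and "s \<le> t" and "i \<noteq> j"
    and "(\<lambda>x. A x $ i $ j) integrable_on {s..t}"
  shows "w s $ j * integral {s..t} (\<lambda>x. A x $ i $ j) \<le> w t $ i"
proof -
  have "A x $ i $ j * w s $ j \<le> shifted x (w x) $ i" if "x \<in> {s..t}" for x
  proof -
    have "shifted x (w s $ j *\<^sub>R axis j 1) $ i \<le> shifted x (w x) $ i"
      using shifted_solution_component_mono[OF w w0, of s x j] shifted_solution_nonneg[OF w w0]
        that by (intro shifted_mono) (auto simp: axis_def)
    then show ?thesis by (simp only: shifted_axis[OF \<open>i \<noteq> j\<close>])
  qed
  then have "integral {s..t} (\<lambda>x. A x $ i $ j) * w s $ j \<le> w t $ i - w s $ i"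
    using has_integral_le[OF has_integral_mult_left[OF integrable_integral[OF assms(5)]]
        antiderivative_from_component[OF w \<open>s \<le> t\<close>]] by blast
  then show ?thesis using w0[of i] by (simp add: mult.commute)
qed

lemma rescaled_solution_shifted:
  assumes "is_solution A s y"
  shows "antiderivative_from (\<lambda>x. shifted x (exp (\<alpha> * (x - s)) *\<^sub>R y x)) s
           (\<lambda>x. exp (\<alpha> * (x - s)) *\<^sub>R y x)"
proof -
  have y: "antiderivative_from (\<lambda>x. A x *v y x) s y"
    using assms by (simp add: is_solution_iff_antiderivative_from)
  have "\<exists>S. finite S \<and> (\<forall>x\<in>{s<..<b} - S. isCont (\<lambda>x. A x *v y x) x)" for b
  proof -
    obtain S where "finite S" and S: "\<forall>x\<in>{s..b} - S. isCont A x"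
      using piecewise_continuous_A unfolding piecewise_continuous_def by blast
    have "isCont y x" if "x \<in> {s<..<b}" for x
      using continuous_on_interior[OF antiderivative_from_continuous_on[OF y, of b]] that by auto
    then have "\<forall>x\<in>{s<..<b} - S. isCont (\<lambda>x. A x *v y x) x"
      using S unfolding matrix_vector_mult_def isCont_def by (auto intro!: tendsto_intros)
    with \<open>finite S\<close> show ?thesis by blast
  qed
  from antiderivative_from_exp_scaleR[OF y this, of \<alpha>] show ?thesis
    by (simp add: matrix_vector_mult_scaleR)
qed

lemma solution_component_decay:
  assumes y: "is_solution A s y" and y0: "\<And>j. 0 \<le> y s $ j" and "s \<le> t"
  shows "exp (- \<alpha> * (t - s)) * y s $ i \<le> y t $ i"
  using shifted_solution_component_mono[OF rescaled_solution_shifted[OF y], of s t i] y0 \<open>s \<le> t\<close>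
    exp_neg_mult_le_iff[of "\<alpha> * (t - s)"] by simp

lemma solution_nonneg:
  assumes y: "is_solution A s y" and y0: "\<And>j. 0 \<le> y s $ j" and "s \<le> t"
  shows "0 \<le> y t $ i"
proof -
  have "0 \<le> exp (- \<alpha> * (t - s)) * y s $ i" using y0[of i] by simp
  then show ?thesis using solution_component_decay[OF assms] by (rule order_trans)
qed

lemma solution_arc_bound:
  assumes y: "is_solution A s y" and y0: "\<And>j. 0 \<le> y s $ j" and "s \<le> t" and "i \<noteq> j"
    and "(\<lambda>x. A x $ i $ j) integrable_on {s..t}"
  shows "exp (- \<alpha> * (t - s)) * (y s $ j * integral {s..t} (\<lambda>x. A x $ i $ j)) \<le> y t $ i"
  using shifted_solution_arc_bound[OF rescaled_solution_shifted[OF y], of t i j] assms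
    exp_neg_mult_le_iff[of "\<alpha> * (t - s)"] by simp

lemma solution_const_minus:
  assumes "is_solution A s y"
  shows "is_solution A s (\<lambda>x. (\<chi> l. c) - y x)"
  unfolding is_solution_def
proof (intro allI impI)
  fix t assume "s \<le> t"
  with assms have "((\<lambda>x. A x *v y x) has_integral (y t - y s)) {s..t}"
    unfolding is_solution_def by blast
  from has_integral_neg[OF this]
  show "((\<lambda>x. A x *v ((\<chi> l. c) - y x)) has_integral ((\<chi> l. c) - y t - ((\<chi> l. c) - y s))) {s..t}"
    by (simp add: matrix_vector_mult_diff_distrib A_mult_const)
qed

lemma solution_minus_const: "is_solution A s y \<Longrightarrow> is_solution A s (\<lambda>x. y x - (\<chi> l. c))"
  unfolding is_solution_def by (simp add: matrix_vector_mult_diff_distrib A_mult_const)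

lemma solution_vec_max_antimono:
  assumes "is_solution A s z" and "s \<le> t"
  shows "vec_max (z t) \<le> vec_max (z s)"
  using solution_nonneg[OF solution_const_minus[OF assms(1), of "vec_max (z s)"] _ assms(2)]
  by (simp add: vec_max_ge vec_max_le_iff)

lemma solution_vec_min_mono:
  assumes "is_solution A s z" and "s \<le> t"
  shows "vec_min (z s) \<le> vec_min (z t)"
  using solution_nonneg[OF solution_minus_const[OF assms(1), of "vec_min (z s)"] _ assms(2)]
  by (simp add: vec_min_le vec_min_ge_iff)

end

section \<open>Uniformly connected systems\<close>

locale uniformly_connected_consensus_system = metzler_consensus_system A \<alpha>
  for A :: "real \<Rightarrow> real^'n^'n" and \<alpha> :: real +
  fixes k :: 'n and \<delta> T :: real
  assumes threshold_pos: "0 < \<delta>" and window_pos: "0 < T"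
    and reachable_from_k:
      "\<And>t l. l \<noteq> k \<Longrightarrow> reachable (delta_digraph (integral {t..t+T} A) \<delta>) k l"
begin

definition window_gain :: real where
  "window_gain = exp (- \<alpha> * T) * min 1 \<delta>"

lemma window_gain_pos: "0 < window_gain"
  using threshold_pos by (simp add: window_gain_def)

lemma window_gain_le_one: "window_gain \<le> 1"
  using bound_pos window_pos threshold_pos unfolding window_gain_def
  by (intro mult_le_one) auto

lemma window_lower_bound_self:
  assumes "is_solution A u y" and "\<And>j. 0 \<le> y u $ j"
  shows "window_gain * y u $ i \<le> y (u + T) $ i"
proof -
  have "window_gain * y u $ i \<le> exp (- \<alpha> * T) * y u $ i"
    using assms(2)[of i] by (intro mult_right_mono) (auto simp: window_gain_def mult_left_le)
  also have "\<dots> \<le> y (u + T) $ i"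
    using solution_component_decay[OF assms, of "u + T"] window_pos by simp
  finally show ?thesis .
qed

lemma window_lower_bound_arc:
  assumes "is_solution A u y" and "\<And>j. 0 \<le> y u $ j"
    and arc: "(p, q) \<in> delta_digraph (integral {u..u+T} A) \<delta>"
  shows "window_gain * y u $ p \<le> y (u + T) $ q"
proof -
  have "q \<noteq> p" and big: "\<delta> < integral {u..u+T} A $ q $ p"
    using arc by (auto simp: delta_digraph_def)
  have "A integrable_on {u..u+T}"
  proof (rule ccontr)
    assume "\<not> A integrable_on {u..u+T}"
    then have "integral {u..u+T} A = 0" by (rule not_integrable_integral)
    with big threshold_pos show False by simp
  qed
  note entry = integral_matrix_entry[OF this, of q p]
  have "min 1 \<delta> * y u $ p \<le> integral {u..u+T} (\<lambda>x. A x $ q $ p) * y u $ p"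
    by (rule mult_right_mono) (use big entry(2) assms(2) in auto)
  then have "window_gain * y u $ p
      \<le> exp (- \<alpha> * T) * (y u $ p * integral {u..u+T} (\<lambda>x. A x $ q $ p))"
    unfolding window_gain_def by (simp add: mult.assoc mult.commute[of "y u $ p"])
  also have "\<dots> \<le> y (u + T) $ q"
    using solution_arc_bound[OF assms(1,2), of "u + T" q p] \<open>q \<noteq> p\<close> entry(1) window_pos by simp
  finally show ?thesis .
qed

lemma lower_bound_spreads_to_all_nodes:
  assumes y: "is_solution A t y" and y0: "\<And>j. 0 \<le> y t $ j"
    and "0 \<le> \<eta>" and "\<eta> \<le> y t $ k"
  shows "window_gain ^ CARD('n) * \<eta> \<le> y (t + real CARD('n) * T) $ i"
proof -
  define L where "L m = {j. window_gain ^ m * \<eta> \<le> y (t + real m * T) $ j}" for m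
  \<comment> \<open>\<open>L m\<close> gains a node in every window until it is everything: some arc leaves it,
    because every node is reachable from \<open>k \<in> L m\<close>.\<close>
  have "k \<in> L m \<and> min (Suc m) CARD('n) \<le> card (L m)" for m
  proof (induction m)
    case 0
    then show ?case using \<open>\<eta> \<le> y t $ k\<close> by (auto simp: L_def Suc_le_eq card_gt_0_iff)
  next
    case (Suc m)
    let ?u = "t + real m * T"
    have "t \<le> ?u" using window_pos by simp
    then have u: "is_solution A ?u y" "\<And>j. 0 \<le> y ?u $ j"
      using is_solution_mono[OF y] solution_nonneg[OF y y0] by auto
    have time: "t + real (Suc m) * T = ?u + T" by (simp add: algebra_simps)
    have grow: "j \<in> L (Suc m)" if "p \<in> L m" "window_gain * y ?u $ p \<le> y (?u + T) $ j" for p j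
    proof -
      have "window_gain ^ m * \<eta> \<le> y ?u $ p" using that(1) by (simp add: L_def)
      then have "window_gain * (window_gain ^ m * \<eta>) \<le> window_gain * y ?u $ p"
        by (rule mult_left_mono) (use window_gain_pos in simp)
      with that(2) show ?thesis unfolding L_def time by (simp add: mult.assoc)
    qed
    have keep: "L m \<subseteq> L (Suc m)" using grow window_lower_bound_self[OF u] by blast
    have "min (Suc (Suc m)) CARD('n) \<le> card (L (Suc m))"
    proof (cases "L m = UNIV")
      case True
      with keep have "L (Suc m) = UNIV" by blast
      then show ?thesis by simp
    next
      case False
      then obtain l where "l \<notin> L m" by blast
      have "k \<in> L m" using Suc.IH by blast
      with \<open>l \<notin> L m\<close> have "(k, l) \<in> (delta_digraph (integral {?u..?u+T} A) \<delta>)\<^sup>+"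
        using reachable_from_k[where l = l and t = ?u] unfolding reachable_def by blast
      then obtain p q
        where "(p, q) \<in> delta_digraph (integral {?u..?u+T} A) \<delta>" and "p \<in> L m" "q \<notin> L m"
        using \<open>k \<in> L m\<close> \<open>l \<notin> L m\<close> by (rule trancl_crosses_boundary)
      then have "insert q (L m) \<subseteq> L (Suc m)" using keep grow window_lower_bound_arc[OF u] by blast
      then have "Suc (card (L m)) \<le> card (L (Suc m))"
        using card_mono[of "L (Suc m)" "insert q (L m)"] \<open>q \<notin> L m\<close> by simp
      then show ?thesis using Suc.IH by linarith
    qed
    with keep Suc.IH show ?case by auto
  qed
  from this[of "CARD('n)"] have "CARD('n) \<le> card (L (CARD('n)))" by simp
  then have "L (CARD('n)) = UNIV" by (intro card_seteq) auto
  then show ?thesis by (auto simp: L_def)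
qed

lemma solution_spread_contracts:
  assumes z: "is_solution A t z"
  shows "vec_spread (z (t + real CARD('n) * T)) \<le> (1 - window_gain ^ CARD('n) / 2) * vec_spread (z t)"
proof -
  let ?g = "window_gain ^ CARD('n)" and ?t = "t + real CARD('n) * T"
  define M m where "M = vec_max (z t)" and "m = vec_min (z t)"
  have "t \<le> ?t" using window_pos by simp
  have "0 \<le> (M - m) / 2" using vec_min_le_max by (simp add: M_def m_def)
  have M: "vec_max (z ?t) \<le> M" and m: "m \<le> vec_min (z ?t)"
    using solution_vec_max_antimono[OF z \<open>t \<le> ?t\<close>] solution_vec_min_mono[OF z \<open>t \<le> ?t\<close>]
    by (simp_all add: M_def m_def)
  have spread: "(1 - ?g / 2) * vec_spread (z t) = M - m - ?g * ((M - m) / 2)"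
    by (simp add: vec_spread_def M_def m_def algebra_simps)
  show ?thesis
  proof (cases "z t $ k \<le> (M + m) / 2")
    case True
    have "?g * ((M - m) / 2) \<le> ((\<chi> l. M) - z ?t) $ i" for i
      by (rule lower_bound_spreads_to_all_nodes[OF solution_const_minus[OF z] _ \<open>0 \<le> (M - m) / 2\<close>])
        (use True in \<open>auto simp: M_def vec_max_ge field_simps\<close>)
    then have "z ?t $ i \<le> M - ?g * ((M - m) / 2)" for i
      unfolding vector_minus_component vec_lambda_beta by (smt (verit))
    then have "vec_max (z ?t) \<le> M - ?g * ((M - m) / 2)" unfolding vec_max_le_iff by blast
    with m spread show ?thesis unfolding vec_spread_def[of "z ?t"] by linarith
  next
    case False
    have "?g * ((M - m) / 2) \<le> (z ?t - (\<chi> l. m)) $ i" for i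
      by (rule lower_bound_spreads_to_all_nodes[OF solution_minus_const[OF z] _ \<open>0 \<le> (M - m) / 2\<close>])
        (use False in \<open>auto simp: m_def vec_min_le field_simps\<close>)
    then have "m + ?g * ((M - m) / 2) \<le> z ?t $ i" for i
      unfolding vector_minus_component vec_lambda_beta by (smt (verit))
    then have "m + ?g * ((M - m) / 2) \<le> vec_min (z ?t)" unfolding vec_min_ge_iff by blast
    with M spread show ?thesis unfolding vec_spread_def[of "z ?t"] by linarith
  qed
qed

lemma solution_spread_exp_decay:
  obtains c r where "0 < c" "0 < r"
    "\<And>t0 z t. is_solution A t0 z \<Longrightarrow> t0 \<le> t \<Longrightarrow>
       vec_spread (z t) \<le> c * exp (- r * (t - t0)) * vec_spread (z t0)"
proof -
  define q where "q = 1 - window_gain ^ CARD('n) / 2"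
  define H where "H = real CARD('n) * T"
  have "0 < window_gain ^ CARD('n)" "window_gain ^ CARD('n) \<le> 1"
    using window_gain_pos window_gain_le_one by (simp_all add: power_le_one)
  then have q: "0 < q" "q < 1" by (simp_all add: q_def)
  have "0 < H" using window_pos by (simp add: H_def)
  have "vec_spread (z t) \<le> 1 / q * exp (- (ln (1 / q) / H) * (t - t0)) * vec_spread (z t0)"
    if z: "is_solution A t0 z" and "t0 \<le> t" for t0 z t
  proof (rule exp_decay_if_contracting[OF q \<open>0 < H\<close> _ _ vec_spread_nonneg \<open>t0 \<le> t\<close>])
    fix s t assume "t0 \<le> s" "s \<le> t"
    with z have "is_solution A s z" using is_solution_mono by blast
    with \<open>s \<le> t\<close> show "vec_spread (z t) \<le> vec_spread (z s)"
      using solution_vec_max_antimono solution_vec_min_mono unfolding vec_spread_def by fastforce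
  next
    fix s assume "t0 \<le> s"
    with z show "vec_spread (z (s + H)) \<le> q * vec_spread (z s)"
      unfolding H_def q_def by (intro solution_spread_contracts) (rule is_solution_mono)
  qed
  moreover have "0 < 1 / q" "0 < ln (1 / q) / H" using q \<open>0 < H\<close> by auto
  ultimately show ?thesis using that by blast
qed

lemma consensus_unif_exp_stable: "unif_exp_stable A consensus_set"
proof -
  obtain c r where "0 < c" "0 < r" and decay:
    "\<And>t0 z t. is_solution A t0 z \<Longrightarrow> t0 \<le> t \<Longrightarrow>
       vec_spread (z t) \<le> c * exp (- r * (t - t0)) * vec_spread (z t0)"
    using solution_spread_exp_decay by blast
  have "infdist (z t) consensus_set \<le> (2 * CARD('n) * c) * exp (- r * (t - t0)) * infdist (z t0) consensus_set"
    if "is_solution A t0 z" "t0 \<le> t" for t0 z t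
  proof -
    have "infdist (z t) consensus_set \<le> CARD('n) * vec_spread (z t)"
      by (rule infdist_consensus_le_vec_spread)
    also have "\<dots> \<le> CARD('n) * (c * exp (- r * (t - t0)) * vec_spread (z t0))"
      using decay[OF that] by (simp add: mult_left_mono)
    also have "\<dots> \<le> CARD('n) * (c * exp (- r * (t - t0)) * (2 * infdist (z t0) consensus_set))"
      using \<open>0 < c\<close> vec_spread_le_infdist_consensus by (intro mult_left_mono) auto
    finally show ?thesis by (simp add: algebra_simps)
  qed
  moreover have "0 < 2 * CARD('n) * c" using \<open>0 < c\<close> by simp
  ultimately show ?thesis using \<open>0 < r\<close> unfolding unif_exp_stable_def by blast
qed

lemma solution_converges:
  assumes z: "is_solution A t0 z"
  shows "\<exists>c. \<forall>i. ((\<lambda>t. z t $ i) \<longlongrightarrow> c) at_top"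
proof (rule components_tendsto_common_limit)
  show "vec_max (z t) \<le> vec_max (z s)" and "vec_min (z s) \<le> vec_min (z t)"
    if "t0 \<le> s" "s \<le> t" for s t
    using solution_vec_max_antimono solution_vec_min_mono is_solution_mono[OF z] that by blast+
  obtain c r where "0 < r" and decay:
    "\<And>t. t0 \<le> t \<Longrightarrow> vec_spread (z t) \<le> c * exp (- r * (t - t0)) * vec_spread (z t0)"
    using solution_spread_exp_decay z by metis
  have "\<forall>\<^sub>F t in at_top. norm (vec_spread (z t)) \<le> c * exp (- r * (t - t0)) * vec_spread (z t0)"
    unfolding eventually_at_top_linorder
  proof (intro exI[of _ t0] allI impI)
    fix t assume "t0 \<le> t"
    then show "norm (vec_spread (z t)) \<le> c * exp (- r * (t - t0)) * vec_spread (z t0)"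
      using decay vec_spread_nonneg[of "z t"] by simp
  qed
  moreover have "((\<lambda>t. c * exp (- r * (t - t0)) * vec_spread (z t0)) \<longlongrightarrow> 0) at_top"
    using \<open>0 < r\<close> by real_asymp
  ultimately show "((\<lambda>t. vec_spread (z t)) \<longlongrightarrow> 0) at_top"
    by (rule Lim_null_comparison)
qed

end

theorem theorem1:
  fixes A :: "real \<Rightarrow> real^'n^'n"
  assumes bdd: "bounded (range A)"
    and pc: "piecewise_continuous A"
    and metz: "\<And>t. metzler (A t)"
    and zrs: "\<And>t. zero_row_sums (A t)"
    and conn: "\<exists>(k::'n) \<delta> T. \<delta> > 0 \<and> T > 0 \<and>
       (\<forall>t. \<forall>l. l \<noteq> k \<longrightarrow> reachable (delta_digraph (integral {t..t+T} A) \<delta>) k l)"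
  shows "unif_exp_stable A consensus_set \<and>
         (\<forall>t0 \<zeta>. is_solution A t0 \<zeta> \<longrightarrow>
            (\<exists>c. \<forall>i. ((\<lambda>t. \<zeta> t $ i) \<longlongrightarrow> c) at_top))"
proof -
  obtain B where "0 < B" "\<And>t i j. \<bar>A t $ i $ j\<bar> \<le> B"
    using bounded_range_matrix_entries[OF bdd] by blast
  moreover obtain k \<delta> T where "0 < \<delta>" "0 < T"
    "\<And>t l. l \<noteq> k \<Longrightarrow> reachable (delta_digraph (integral {t..t+T} A) \<delta>) k l"
    using conn by blast
  ultimately interpret uniformly_connected_consensus_system A B k \<delta> T
    using pc metz zrs by unfold_locales
  show ?thesis using consensus_unif_exp_stable solution_converges by blast
qed

end
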